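(* Let $F:\mathbb{R}^d\to\mathbb{R}^d$ be $L$-Lipschitz, $G:\mathbb{R}^d\rightrightarrows\mathbb{R}^d$ maximally monotone, the solution set of $0\in F(x)+G(x)$ nonempty, and let $x^\star$ be a solution with $\langle u,x-x^\star\rangle\ge-\rho\|u\|^2$ for all $(x,u)$ in the graph of $F+G$, where $0<\rho<\eta$. Let $\alpha=1-\frac\rho\eta$, $\alpha_k=\frac{\alpha}{\sqrt{k+2}\log(k+3)}$, and let $(x_k)$ be random iterates with $x_{k+1}=(1-\alpha_k)x_k+\alpha_k\widetilde J_{\eta(F+G)}(x_k)$, where the random points $\widetilde J_{\eta(F+G)}(x_k)$ satisfy $\mathbb{E}_k\|\widetilde J_{\eta(F+G)}(x_k)-J_{\eta(F+G)}(x_k)\|^2\le\varepsilon_{k,v}^2$ and $\|\mathbb{E}_k[\widetilde J_{\eta(F+G)}(x_k)]-J_{\eta(F+G)}(x_k)\|\le\varepsilon_{k,b}$. Then $$\frac\alpha4\sum_{k=0}^{K-1}\alpha_k\mathbb{E}\|(\mathrm{Id}-J_{\eta(F+G)})(x_k)\|^2\le\frac12\|x_0-x^\star\|^2+\frac32\sum_{k=0}^{K-1}\alpha_k^2\mathbb{E}[\varepsilon_{k,v}^2]+\sum_{k=0}^{K-1}\alpha_k\mathbb{E}\big[\|x_k-x^\star\|\varepsilon_{k,b}\big].$$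
   Context: For an operator $A$, $J_A=(\mathrm{Id}+A)^{-1}$. $\mathbb{E}_k$ denotes expectation conditioned on the randomness of $x_1,\dots,x_k$; $\varepsilon_{k,v},\varepsilon_{k,b}$ may be random quantities measurable with respect to that conditioning. *)

theory Defs
  imports "HOL-Analysis.Analysis" "HOL-Probability.Probability"
begin

text \<open>Set-valued operators on R^d are represented by their graphs.\<close>

definition monotone_op :: "('a::real_inner \<times> 'a) set \<Rightarrow> bool" where
  "monotone_op A \<longleftrightarrow> (\<forall>(x,u)\<in>A. \<forall>(y,v)\<in>A. inner (u - v) (x - y) \<ge> 0)"

definition max_monotone :: "('a::real_inner \<times> 'a) set \<Rightarrow> bool" where
  "max_monotone A \<longleftrightarrow> monotone_op A \<and> (\<forall>B. monotone_op B \<and> A \<subseteq> B \<longrightarrow> B = A)"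

definition op_sum :: "('a \<Rightarrow> 'a::real_vector) \<Rightarrow> ('a \<times> 'a) set \<Rightarrow> ('a \<times> 'a) set" where
  "op_sum F G = {(x, F x + u) | x u. (x, u) \<in> G}"

text \<open>Resolvent J_{\<eta>A} = (Id + \<eta>A)^{-1} evaluated at x (as a set).\<close>
definition resolvent :: "real \<Rightarrow> ('a::real_vector \<times> 'a) set \<Rightarrow> 'a \<Rightarrow> 'a set" where
  "resolvent \<eta> A x = {y. \<exists>u. (y, u) \<in> A \<and> x = y + \<eta> *\<^sub>R u}"

definition nat_filt :: "'w measure \<Rightarrow> (nat \<Rightarrow> 'w \<Rightarrow> 'b::topological_space) \<Rightarrow> nat \<Rightarrow> 'w measure" where
  "nat_filt M X k = sigma (space M) (\<Union>i\<in>{..k}. {X i -` A \<inter> space M | A. A \<in> sets borel})"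

definition vec_cond_exp :: "'w measure \<Rightarrow> 'w measure \<Rightarrow> ('w \<Rightarrow> real^'n) \<Rightarrow> 'w \<Rightarrow> real^'n" where
  "vec_cond_exp M F X = (\<lambda>w. \<chi> i. real_cond_exp M F (\<lambda>v. X v $ i) w)"

end

theory Submission
  imports Defs
begin

text \<open>With \<open>\<alpha> = 1 - \<rho>/\<eta>\<close>, weak Minty at \<open>x\<^sup>*\<close> applied to the point
  \<open>(J z, (z - J z)/\<eta>)\<close> of the graph of \<open>F + G\<close> gives \<open>\<langle>z - J z, z - x\<^sup>*\<rangle> \<ge> \<alpha> \<parallel>z - J z\<parallel>\<^sup>2\<close>.
  Expanding \<open>\<parallel>x\<^sub>k\<^sub>+\<^sub>1 - x\<^sup>*\<parallel>\<^sup>2\<close> along the relaxed step, this yields the descent term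
  \<open>-2 \<alpha>\<^sub>k \<alpha> \<parallel>x\<^sub>k - J x\<^sub>k\<parallel>\<^sup>2\<close>. As \<open>x\<^sub>k - x\<^sup>*\<close> is measurable with respect to \<open>x\<^sub>0, \<dots>, x\<^sub>k\<close>, the
  tower property lets the cross term with the resolvent error see only the conditional bias,
  bounded by \<open>\<parallel>x\<^sub>k - x\<^sup>*\<parallel> \<epsilon>\<^sub>k\<^sub>,\<^sub>b\<close>, and bounds the squared error by \<open>\<epsilon>\<^sub>k\<^sub>,\<^sub>v\<^sup>2\<close>. Finally
  \<open>\<alpha>\<^sub>k \<le> 3\<alpha>/4\<close> lets the descent term absorb \<open>2 \<alpha>\<^sub>k\<^sup>2 \<parallel>x\<^sub>k - J x\<^sub>k\<parallel>\<^sup>2\<close>, and the one-step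
  bounds telescope.\<close>

lemma resolvent_residual_inner_ge:
  fixes z xs :: "'a::real_inner"
  assumes J: "Jz \<in> resolvent \<eta> A z"
    and weak_minty: "\<forall>(y,u)\<in>A. inner u (y - xs) \<ge> - \<rho> * (norm u)\<^sup>2"
    and \<eta>: "0 < \<eta>"
  shows "(1 - \<rho>/\<eta>) * (norm (z - Jz))\<^sup>2 \<le> inner (z - Jz) (z - xs)"
proof -
  obtain u where u: "(Jz, u) \<in> A" and res: "z - Jz = \<eta> *\<^sub>R u"
    using J unfolding resolvent_def by auto
  have minty_u: "- \<rho> * (norm u)\<^sup>2 \<le> inner u (Jz - xs)" using weak_minty u by auto
  have norm_res: "(norm (z - Jz))\<^sup>2 = \<eta>\<^sup>2 * (norm u)\<^sup>2"
    using \<eta> by (simp add: res power_mult_distrib)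
  have "inner (z - Jz) (z - xs) = inner (z - Jz) (z - Jz) + inner (z - Jz) (Jz - xs)"
    by (simp add: inner_diff_right)
  also have "\<dots> = (norm (z - Jz))\<^sup>2 + \<eta> * inner u (Jz - xs)"
    by (simp only: power2_norm_eq_inner) (simp add: res)
  also have "\<dots> \<ge> (norm (z - Jz))\<^sup>2 - \<eta> * \<rho> * (norm u)\<^sup>2"
    using mult_left_mono[OF minty_u, of \<eta>] \<eta> by simp
  also have "\<eta> * \<rho> * (norm u)\<^sup>2 = \<rho>/\<eta> * (norm (z - Jz))\<^sup>2"
    using norm_res \<eta> by (simp add: power2_eq_square field_simps)
  finally show ?thesis by (simp add: algebra_simps)
qed

lemma norm_le_of_inner_ge:
  fixes r v :: "'a::real_inner"
  assumes "0 < \<alpha>" and "\<alpha> * (norm r)\<^sup>2 \<le> inner r v"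
  shows "norm r \<le> norm v / \<alpha>"
proof -
  have "\<alpha> * (norm r)\<^sup>2 \<le> norm r * norm v"
    using assms(2) Cauchy_Schwarz_ineq2[of r v] by simp
  then have "\<alpha> * norm r \<le> norm v"
    by (cases "r = 0") (auto simp: power2_eq_square)
  with assms(1) show ?thesis by (simp add: field_simps)
qed

lemma norm_sq_relaxed_step_le:
  fixes v r e :: "'a::real_inner"
  assumes descent: "\<alpha> * (norm r)\<^sup>2 \<le> inner r v" and "0 \<le> a"
  shows "(norm (v - a *\<^sub>R (r - e)))\<^sup>2 \<le> (norm v)\<^sup>2 - 2 * a * \<alpha> * (norm r)\<^sup>2 + 2 * a * inner e v
           + 2 * a\<^sup>2 * (norm r)\<^sup>2 + 2 * a\<^sup>2 * (norm e)\<^sup>2"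
proof -
  have expand: "(norm (v - a *\<^sub>R (r - e)))\<^sup>2
      = (norm v)\<^sup>2 - 2 * a * inner r v + 2 * a * inner e v + a\<^sup>2 * (norm (r - e))\<^sup>2"
    unfolding power2_norm_eq_inner
    by (simp add: inner_diff_left inner_diff_right inner_commute algebra_simps power2_eq_square)
  have "(norm (r - e))\<^sup>2 \<le> (norm r + norm e)\<^sup>2"
    using norm_triangle_ineq4[of r e] by (simp add: power_mono)
  also have "\<dots> \<le> 2 * (norm r)\<^sup>2 + 2 * (norm e)\<^sup>2"
    using sum_squares_bound[of "norm r" "norm e"] by (simp add: power2_sum)
  finally have "a\<^sup>2 * (norm (r - e))\<^sup>2 \<le> a\<^sup>2 * (2 * (norm r)\<^sup>2 + 2 * (norm e)\<^sup>2)"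
    by (simp add: mult_left_mono)
  moreover have "2 * a * (\<alpha> * (norm r)\<^sup>2) \<le> 2 * a * inner r v"
    using mult_left_mono[OF descent] \<open>0 \<le> a\<close> by simp
  ultimately show ?thesis using expand by (simp add: algebra_simps)
qed

lemma step_size_bounds:
  assumes "0 < \<alpha>"
  shows "0 < \<alpha> / (sqrt (real k + 2) * ln (real k + 3))"
    and "\<alpha> / (sqrt (real k + 2) * ln (real k + 3)) \<le> 3/4 * \<alpha>"
proof -
  have "4/3 \<le> sqrt (2::real)"
    by (rule real_le_rsqrt) (simp add: power2_eq_square)
  also have "\<dots> \<le> sqrt (real k + 2)" by simp
  finally have sqrt_ge: "4/3 \<le> sqrt (real k + 2)" .
  have "1 = ln (exp (1::real))" by simp
  also have "\<dots> \<le> ln 3" using exp_le by (subst ln_le_cancel_iff) auto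
  also have "\<dots> \<le> ln (real k + 3)" by simp
  finally have "1 \<le> ln (real k + 3)" .
  with sqrt_ge have denom: "4/3 \<le> sqrt (real k + 2) * ln (real k + 3)"
    using mult_mono[of "4/3" "sqrt (real k + 2)" 1 "ln (real k + 3)"] by simp
  with assms show "0 < \<alpha> / (sqrt (real k + 2) * ln (real k + 3))" by simp
  from denom assms have "\<alpha> / (sqrt (real k + 2) * ln (real k + 3)) \<le> \<alpha> / (4/3)"
    by (intro divide_left_mono) auto
  then show "\<alpha> / (sqrt (real k + 2) * ln (real k + 3)) \<le> 3/4 * \<alpha>" by simp
qed

lemma weighted_sum_le_of_descent:
  fixes a R B V D :: "nat \<Rightarrow> real"
  assumes descent: "\<And>k. \<alpha>/2 * a k * R k \<le> D k - D (Suc k) + 2 * a k * B k + 2 * (a k)\<^sup>2 * V k"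
    and "0 \<le> D K" and "\<And>k. 0 \<le> V k"
  shows "\<alpha>/4 * (\<Sum>k<K. a k * R k)
    \<le> 1/2 * D 0 + 3/2 * (\<Sum>k<K. (a k)\<^sup>2 * V k) + (\<Sum>k<K. a k * B k)"
proof -
  have "\<alpha>/2 * (\<Sum>k<K. a k * R k) = (\<Sum>k<K. \<alpha>/2 * a k * R k)"
    by (simp add: sum_distrib_left mult.assoc)
  also have "\<dots> \<le> (\<Sum>k<K. D k - D (Suc k) + 2 * a k * B k + 2 * (a k)\<^sup>2 * V k)"
    by (rule sum_mono) (rule descent)
  also have "\<dots> = D 0 - D K + 2 * (\<Sum>k<K. a k * B k) + 2 * (\<Sum>k<K. (a k)\<^sup>2 * V k)"
    by (simp add: sum.distrib sum_lessThan_telescope' sum_distrib_left mult.assoc)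
  finally have "\<alpha>/2 * (\<Sum>k<K. a k * R k)
      \<le> D 0 - D K + 2 * (\<Sum>k<K. a k * B k) + 2 * (\<Sum>k<K. (a k)\<^sup>2 * V k)" .
  moreover have "0 \<le> (\<Sum>k<K. (a k)\<^sup>2 * V k)" using assms(3) by (intro sum_nonneg) simp
  ultimately show ?thesis using \<open>0 \<le> D K\<close> by linarith
qed

lemma space_nat_filt: "space (nat_filt M X k) = space M"
  and sets_nat_filt: "sets (nat_filt M X k)
    = sigma_sets (space M) (\<Union>i\<in>{..k}. {X i -` A \<inter> space M | A. A \<in> sets borel})"
  unfolding nat_filt_def by (subst space_measure_of sets_measure_of; auto)+

lemma subalgebra_nat_filt:
  assumes "\<And>i. X i \<in> borel_measurable M"
  shows "subalgebra M (nat_filt M X k)"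
proof -
  have "(\<Union>i\<in>{..k}. {X i -` A \<inter> space M | A. A \<in> sets borel}) \<subseteq> sets M"
    using assms measurable_sets by blast
  then show ?thesis
    unfolding subalgebra_def space_nat_filt sets_nat_filt by (simp add: sets.sigma_sets_subset)
qed

lemma measurable_nat_filt:
  assumes "i \<le> k"
  shows "X i \<in> borel_measurable (nat_filt M X k)"
proof (rule measurableI)
  fix A :: "'b set" assume "A \<in> sets borel"
  with assms show "X i -` A \<inter> space (nat_filt M X k) \<in> sets (nat_filt M X k)"
    unfolding space_nat_filt sets_nat_filt by blast
qed auto

lemma (in finite_measure) finite_measure_subalgebra_nat_filt:
  assumes "\<And>i. X i \<in> borel_measurable M"
  shows "finite_measure_subalgebra M (nat_filt M X k)"
  using subalgebra_nat_filt[OF assms]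
  by (simp add: finite_measure_subalgebra_def finite_measure_subalgebra_axioms_def finite_measure_axioms)

definition square_integrable :: "'a measure \<Rightarrow> ('a \<Rightarrow> 'b::euclidean_space) \<Rightarrow> bool" where
  "square_integrable M f \<longleftrightarrow> f \<in> borel_measurable M \<and> integrable M (\<lambda>w. (norm (f w))\<^sup>2)"

lemma square_integrable_dominated:
  assumes f: "square_integrable M f" and g: "g \<in> borel_measurable M"
    and bound: "\<And>w. norm (g w) \<le> c * norm (f w)"
  shows "square_integrable M g"
proof -
  have [measurable]: "g \<in> borel_measurable M" by (rule g)
  have sq_bound: "(norm (g w))\<^sup>2 \<le> c\<^sup>2 * (norm (f w))\<^sup>2" for w
    using power_mono[OF bound[of w] norm_ge_zero] by (simp add: power_mult_distrib)
  have dominant: "integrable M (\<lambda>w. c\<^sup>2 * (norm (f w))\<^sup>2)"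
    using f by (simp add: square_integrable_def)
  have "integrable M (\<lambda>w. (norm (g w))\<^sup>2)"
  proof (rule Bochner_Integration.integrable_bound[OF dominant])
    show "(\<lambda>w. (norm (g w))\<^sup>2) \<in> borel_measurable M" by measurable
    show "AE w in M. norm ((norm (g w))\<^sup>2) \<le> norm (c\<^sup>2 * (norm (f w))\<^sup>2)"
      using sq_bound by (intro AE_I2) simp
  qed
  then show ?thesis using g by (simp add: square_integrable_def)
qed

lemma square_integrable_scaleR:
  "square_integrable M f \<Longrightarrow> square_integrable M (\<lambda>w. c *\<^sub>R f w)"
  by (rule square_integrable_dominated[where c = "\<bar>c\<bar>"]) (auto simp: square_integrable_def)

lemma integrable_inner_of_square_integrable:
  assumes f: "square_integrable M f" and g: "square_integrable M g"
  shows "integrable M (\<lambda>w. inner (f w) (g w))"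
proof -
  have [measurable]: "f \<in> borel_measurable M" "g \<in> borel_measurable M"
    using f g by (auto simp: square_integrable_def)
  have inner_bound: "\<bar>inner (f w) (g w)\<bar> \<le> (norm (f w))\<^sup>2 + (norm (g w))\<^sup>2" for w
  proof -
    have "\<bar>inner (f w) (g w)\<bar> \<le> norm (f w) * norm (g w)" by (rule Cauchy_Schwarz_ineq2)
    moreover have "2 * (norm (f w) * norm (g w)) \<le> (norm (f w))\<^sup>2 + (norm (g w))\<^sup>2"
      using sum_squares_bound[of "norm (f w)" "norm (g w)"] by simp
    moreover have "0 \<le> norm (f w) * norm (g w)" by simp
    ultimately show ?thesis by linarith
  qed
  have dominant: "integrable M (\<lambda>w. (norm (f w))\<^sup>2 + (norm (g w))\<^sup>2)"
    using f g by (simp add: square_integrable_def)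
  show ?thesis
  proof (rule Bochner_Integration.integrable_bound[OF dominant])
    show "(\<lambda>w. inner (f w) (g w)) \<in> borel_measurable M" by measurable
    show "AE w in M. norm (inner (f w) (g w)) \<le> norm ((norm (f w))\<^sup>2 + (norm (g w))\<^sup>2)"
      using inner_bound by (intro AE_I2) simp
  qed
qed

lemma square_integrable_add:
  assumes f: "square_integrable M f" and g: "square_integrable M g"
  shows "square_integrable M (\<lambda>w. f w + g w)"
proof -
  have "(norm (f w + g w))\<^sup>2 = (norm (f w))\<^sup>2 + 2 * inner (f w) (g w) + (norm (g w))\<^sup>2" for w
    by (simp add: dot_norm field_simps)
  then have "integrable M (\<lambda>w. (norm (f w + g w))\<^sup>2)"
    using f g integrable_inner_of_square_integrable[OF f g] by (simp add: square_integrable_def)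
  then show ?thesis using f g by (auto simp: square_integrable_def intro: borel_measurable_add)
qed

lemma square_integrable_diff:
  "square_integrable M f \<Longrightarrow> square_integrable M g \<Longrightarrow> square_integrable M (\<lambda>w. f w - g w)"
  using square_integrable_add[OF _ square_integrable_scaleR[of M g "-1"], of f] by simp

lemma square_integrable_cong:
  assumes "square_integrable M f" and "\<And>w. w \<in> space M \<Longrightarrow> g w = f w"
  shows "square_integrable M g"
proof -
  have "g \<in> borel_measurable M \<longleftrightarrow> f \<in> borel_measurable M"
    using assms(2) by (intro measurable_cong) simp
  moreover have "integrable M (\<lambda>w. (norm (g w))\<^sup>2) \<longleftrightarrow> integrable M (\<lambda>w. (norm (f w))\<^sup>2)"
    using assms(2) by (intro Bochner_Integration.integrable_cong) simp_all
  ultimately show ?thesis using assms(1) by (simp add: square_integrable_def)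
qed

lemma (in finite_measure) square_integrable_const: "square_integrable M (\<lambda>w. c)"
  by (simp add: square_integrable_def)

lemma square_integrable_linear_recursion:
  assumes "square_integrable M (x 0)" and "\<And>k. square_integrable M (y k)"
    and "\<And>k w. w \<in> space M \<Longrightarrow> x (Suc k) w = c k *\<^sub>R x k w + d k *\<^sub>R y k w"
  shows "square_integrable M (x k)"
proof (induction k)
  case (Suc k)
  show ?case
    using assms(3) by (intro square_integrable_cong[OF square_integrable_add
          [OF square_integrable_scaleR[OF Suc] square_integrable_scaleR[OF assms(2)]]])
qed (rule assms(1))

lemma square_integrable_component:
  fixes f :: "'a \<Rightarrow> real^'n"
  assumes f: "square_integrable M f"
  shows "square_integrable M (\<lambda>w. f w $ i)"
proof (rule square_integrable_dominated[OF f, where c = 1])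
  have "f \<in> borel_measurable M" using f by (simp add: square_integrable_def)
  from measurable_compose[OF this borel_measurable_nth]
  show "(\<lambda>w. f w $ i) \<in> borel_measurable M" by simp
qed (simp add: component_le_norm_cart)

lemma (in sigma_finite_subalgebra) integral_inner_vec_cond_exp:
  fixes Y V :: "'a \<Rightarrow> real^'n"
  assumes Y: "square_integrable M Y" and V: "square_integrable M V"
    and VF: "V \<in> borel_measurable F"
  shows "integrable M (\<lambda>w. inner (vec_cond_exp M F Y w) (V w))"
    and "(\<integral>w. inner (vec_cond_exp M F Y w) (V w) \<partial>M) = (\<integral>w. inner (Y w) (V w) \<partial>M)"
proof -
  have "Y \<in> borel_measurable M" using Y by (simp add: square_integrable_def)
  note Y_comp = measurable_compose[OF this borel_measurable_nth]
  note V_comp = measurable_compose[OF VF borel_measurable_nth]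
  have components: "integrable M (\<lambda>w. V w $ i * Y w $ i)" for i
    using integrable_inner_of_square_integrable
        [OF square_integrable_component[OF V] square_integrable_component[OF Y]]
    by simp
  note cond_exp = real_cond_exp_intg[OF components V_comp Y_comp]
  have inner_cond_exp: "inner (vec_cond_exp M F Y w) (V w)
      = (\<Sum>i\<in>UNIV. V w $ i * real_cond_exp M F (\<lambda>u. Y u $ i) w)" for w
    by (simp add: inner_vec_def vec_cond_exp_def mult.commute)
  have inner_Y: "inner (Y w) (V w) = (\<Sum>i\<in>UNIV. V w $ i * Y w $ i)" for w
    by (simp add: inner_vec_def mult.commute)
  show "integrable M (\<lambda>w. inner (vec_cond_exp M F Y w) (V w))"
    unfolding inner_cond_exp using cond_exp(1) by simp
  show "(\<integral>w. inner (vec_cond_exp M F Y w) (V w) \<partial>M) = (\<integral>w. inner (Y w) (V w) \<partial>M)"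
    unfolding inner_cond_exp inner_Y using cond_exp components
    by (simp add: Bochner_Integration.integral_sum)
qed

lemma (in sigma_finite_subalgebra) integral_inner_le_of_cond_exp_bias:
  fixes Y Z V :: "'a \<Rightarrow> real^'n"
  assumes Y: "square_integrable M Y" and Z: "square_integrable M Z"
    and V: "square_integrable M V" and VF: "V \<in> borel_measurable F"
    and b_int: "integrable M (\<lambda>w. norm (V w) * b w)"
    and bias: "AE w in M. norm (vec_cond_exp M F Y w - Z w) \<le> b w"
  shows "(\<integral>w. inner (Y w - Z w) (V w) \<partial>M) \<le> (\<integral>w. norm (V w) * b w \<partial>M)"
proof -
  note cond_exp = integral_inner_vec_cond_exp[OF Y V VF]
  have YV: "integrable M (\<lambda>w. inner (Y w) (V w))"
    and ZV: "integrable M (\<lambda>w. inner (Z w) (V w))"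
    using integrable_inner_of_square_integrable Y Z V by blast+
  have cond_exp_ZV: "integrable M (\<lambda>w. inner (vec_cond_exp M F Y w - Z w) (V w))"
    using cond_exp(1) ZV by (simp add: inner_diff_left)
  have "(\<integral>w. inner (Y w - Z w) (V w) \<partial>M)
      = (\<integral>w. inner (Y w) (V w) \<partial>M) - (\<integral>w. inner (Z w) (V w) \<partial>M)"
    using YV ZV by (simp add: inner_diff_left)
  also have "\<dots> = (\<integral>w. inner (vec_cond_exp M F Y w - Z w) (V w) \<partial>M)"
    using cond_exp ZV by (simp add: inner_diff_left)
  also have "\<dots> \<le> (\<integral>w. norm (V w) * b w \<partial>M)"
    using cond_exp_ZV b_int
  proof (rule integral_mono_AE)
    show "AE w in M. inner (vec_cond_exp M F Y w - Z w) (V w) \<le> norm (V w) * b w"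
      using bias
    proof eventually_elim
      case (elim w)
      have "inner (vec_cond_exp M F Y w - Z w) (V w)
          \<le> norm (vec_cond_exp M F Y w - Z w) * norm (V w)"
        by (rule norm_cauchy_schwarz)
      also have "\<dots> \<le> b w * norm (V w)" using elim by (simp add: mult_right_mono)
      finally show ?case by (simp add: mult.commute)
    qed
  qed
  finally show ?thesis .
qed

lemma (in sigma_finite_subalgebra) integral_le_of_cond_exp_le:
  fixes f g :: "'a \<Rightarrow> real"
  assumes f: "integrable M f" and g: "integrable M g"
    and le: "AE w in M. real_cond_exp M F f w \<le> g w"
  shows "(\<integral>w. f w \<partial>M) \<le> (\<integral>w. g w \<partial>M)"
proof -
  have "(\<integral>w. f w \<partial>M) = (\<integral>w. real_cond_exp M F f w \<partial>M)"
    using real_cond_exp_int(2)[OF f] by simp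
  also have "\<dots> \<le> (\<integral>w. g w \<partial>M)"
    by (rule integral_mono_AE[OF real_cond_exp_int(1)[OF f] g le])
  finally show ?thesis .
qed

lemma (in finite_measure) integral_norm_sq_relaxed_step_le:
  fixes X Y T :: "'a \<Rightarrow> 'b::euclidean_space" and J :: "'b \<Rightarrow> 'b"
  assumes X: "square_integrable M X" and T: "square_integrable M T"
    and JX: "square_integrable M (\<lambda>w. J (X w))"
    and Y: "\<And>w. w \<in> space M \<Longrightarrow> Y w = (1 - a) *\<^sub>R X w + a *\<^sub>R T w"
    and resid: "\<And>z. \<alpha> * (norm (z - J z))\<^sup>2 \<le> inner (z - J z) (z - xs)" and "0 \<le> a"
  shows "(\<integral>w. (norm (Y w - xs))\<^sup>2 \<partial>M)
    \<le> (\<integral>w. (norm (X w - xs))\<^sup>2 \<partial>M) - 2 * a * \<alpha> * (\<integral>w. (norm (X w - J (X w)))\<^sup>2 \<partial>M)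
      + 2 * a * (\<integral>w. inner (T w - J (X w)) (X w - xs) \<partial>M)
      + 2 * a\<^sup>2 * (\<integral>w. (norm (X w - J (X w)))\<^sup>2 \<partial>M)
      + 2 * a\<^sup>2 * (\<integral>w. (norm (T w - J (X w)))\<^sup>2 \<partial>M)"
proof -
  have pointwise: "(norm (Y w - xs))\<^sup>2 \<le> (norm (X w - xs))\<^sup>2 - 2 * a * \<alpha> * (norm (X w - J (X w)))\<^sup>2
      + 2 * a * inner (T w - J (X w)) (X w - xs) + 2 * a\<^sup>2 * (norm (X w - J (X w)))\<^sup>2
      + 2 * a\<^sup>2 * (norm (T w - J (X w)))\<^sup>2" if "w \<in> space M" for w
  proof -
    have "Y w - xs = (X w - xs) - a *\<^sub>R ((X w - J (X w)) - (T w - J (X w)))"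
      using Y[OF that] by (simp add: algebra_simps)
    then show ?thesis using norm_sq_relaxed_step_le[OF resid \<open>0 \<le> a\<close>] by presburger
  qed
  have Y_dist: "square_integrable M (\<lambda>w. Y w - xs)"
    using square_integrable_cong[OF square_integrable_add
        [OF square_integrable_scaleR[OF X] square_integrable_scaleR[OF T]] Y]
    by (intro square_integrable_diff square_integrable_const)
  have X_dist: "square_integrable M (\<lambda>w. X w - xs)"
    by (rule square_integrable_diff[OF X square_integrable_const])
  have err: "square_integrable M (\<lambda>w. T w - J (X w))" by (rule square_integrable_diff[OF T JX])
  have ints: "integrable M (\<lambda>w. (norm (Y w - xs))\<^sup>2)" "integrable M (\<lambda>w. (norm (X w - xs))\<^sup>2)"
    "integrable M (\<lambda>w. (norm (X w - J (X w)))\<^sup>2)" "integrable M (\<lambda>w. (norm (T w - J (X w)))\<^sup>2)"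
    "integrable M (\<lambda>w. inner (T w - J (X w)) (X w - xs))"
    using Y_dist X_dist square_integrable_diff[OF X JX] err
      integrable_inner_of_square_integrable[OF err X_dist]
    by (simp_all add: square_integrable_def)
  have "(\<integral>w. (norm (Y w - xs))\<^sup>2 \<partial>M) \<le> (\<integral>w. (norm (X w - xs))\<^sup>2
      - 2 * a * \<alpha> * (norm (X w - J (X w)))\<^sup>2 + 2 * a * inner (T w - J (X w)) (X w - xs)
      + 2 * a\<^sup>2 * (norm (X w - J (X w)))\<^sup>2 + 2 * a\<^sup>2 * (norm (T w - J (X w)))\<^sup>2 \<partial>M)"
    by (rule integral_mono[OF ints(1) _ pointwise]) (use ints in auto)
  also have "\<dots> = (\<integral>w. (norm (X w - xs))\<^sup>2 \<partial>M) - 2 * a * \<alpha> * (\<integral>w. (norm (X w - J (X w)))\<^sup>2 \<partial>M)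
      + 2 * a * (\<integral>w. inner (T w - J (X w)) (X w - xs) \<partial>M)
      + 2 * a\<^sup>2 * (\<integral>w. (norm (X w - J (X w)))\<^sup>2 \<partial>M)
      + 2 * a\<^sup>2 * (\<integral>w. (norm (T w - J (X w)))\<^sup>2 \<partial>M)"
    using ints by simp
  finally show ?thesis .
qed

lemma (in finite_measure_subalgebra) expected_relaxed_step_descent:
  fixes X Y T :: "'a \<Rightarrow> real^'n" and J :: "real^'n \<Rightarrow> real^'n"
  assumes X: "square_integrable M X" and XF: "X \<in> borel_measurable F"
    and T: "square_integrable M T" and J_meas: "J \<in> borel_measurable borel"
    and Y: "\<And>w. w \<in> space M \<Longrightarrow> Y w = (1 - a) *\<^sub>R X w + a *\<^sub>R T w"
    and resid: "\<And>z. \<alpha> * (norm (z - J z))\<^sup>2 \<le> inner (z - J z) (z - xs)"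
    and \<alpha>: "0 < \<alpha>" and a: "0 \<le> a" "a \<le> 3/4 * \<alpha>"
    and v_int: "integrable M (\<lambda>w. (v w)\<^sup>2)"
    and b_int: "integrable M (\<lambda>w. norm (X w - xs) * b w)"
    and variance: "AE w in M. real_cond_exp M F (\<lambda>u. (norm (T u - J (X u)))\<^sup>2) w \<le> (v w)\<^sup>2"
    and bias: "AE w in M. norm (vec_cond_exp M F T w - J (X w)) \<le> b w"
  shows "\<alpha>/2 * a * (\<integral>w. (norm (X w - J (X w)))\<^sup>2 \<partial>M)
    \<le> (\<integral>w. (norm (X w - xs))\<^sup>2 \<partial>M) - (\<integral>w. (norm (Y w - xs))\<^sup>2 \<partial>M)
      + 2 * a * (\<integral>w. norm (X w - xs) * b w \<partial>M) + 2 * a\<^sup>2 * (\<integral>w. (v w)\<^sup>2 \<partial>M)"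
proof -
  have XM: "X \<in> borel_measurable M" using X by (simp add: square_integrable_def)
  have X_dist: "square_integrable M (\<lambda>w. X w - xs)"
    by (rule square_integrable_diff[OF X square_integrable_const])
  have "square_integrable M (\<lambda>w. X w - J (X w))"
    using norm_le_of_inner_ge[OF \<alpha> resid] XM measurable_compose[OF XM J_meas]
    by (intro square_integrable_dominated[OF X_dist, where c = "1/\<alpha>"]) auto
  then have JX: "square_integrable M (\<lambda>w. J (X w))"
    using square_integrable_diff[OF X] by fastforce
  define R where "R = (\<integral>w. (norm (X w - J (X w)))\<^sup>2 \<partial>M)"
  have "(\<integral>w. inner (T w - J (X w)) (X w - xs) \<partial>M) \<le> (\<integral>w. norm (X w - xs) * b w \<partial>M)"
    by (rule integral_inner_le_of_cond_exp_bias[OF T JX X_dist _ b_int bias]) (use XF in measurable)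
  then have "2 * a * (\<integral>w. inner (T w - J (X w)) (X w - xs) \<partial>M)
      \<le> 2 * a * (\<integral>w. norm (X w - xs) * b w \<partial>M)"
    using a(1) by (simp add: mult_left_mono)
  moreover have "(\<integral>w. (norm (T w - J (X w)))\<^sup>2 \<partial>M) \<le> (\<integral>w. (v w)\<^sup>2 \<partial>M)"
    using square_integrable_diff[OF T JX] v_int variance
    by (intro integral_le_of_cond_exp_le) (simp_all add: square_integrable_def)
  then have "2 * a\<^sup>2 * (\<integral>w. (norm (T w - J (X w)))\<^sup>2 \<partial>M) \<le> 2 * a\<^sup>2 * (\<integral>w. (v w)\<^sup>2 \<partial>M)"
    by (simp add: mult_left_mono)
  moreover have "2 * a\<^sup>2 * R \<le> 3/2 * a * \<alpha> * R"
  proof -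
    have "a * a \<le> a * (3/4 * \<alpha>)" using mult_left_mono[OF a(2) a(1)] .
    moreover have "0 \<le> 2 * R" by (simp add: R_def)
    ultimately show ?thesis
      using mult_right_mono[of "a * a" "a * (3/4 * \<alpha>)" "2 * R"] by (simp add: power2_eq_square mult_ac)
  qed
  moreover have "\<alpha>/2 * a * R = 2 * a * \<alpha> * R - 3/2 * a * \<alpha> * R" by (simp add: algebra_simps)
  ultimately show ?thesis
    using integral_norm_sq_relaxed_step_le[OF X T JX Y resid a(1)] unfolding R_def[symmetric]
    by linarith
qed

theorem lemmaC8:
  fixes M :: "'w measure"
    and F :: "real^'n \<Rightarrow> real^'n" and G :: "((real^'n) \<times> (real^'n)) set"
    and J :: "real^'n \<Rightarrow> real^'n"
    and L \<rho> \<eta> :: real and xstar x0 :: "real^'n"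
    and x Jt :: "nat \<Rightarrow> 'w \<Rightarrow> real^'n"
    and ev eb :: "nat \<Rightarrow> 'w \<Rightarrow> real"
    and K :: nat
  assumes M: "prob_space M"
    and Lip: "L-lipschitz_on UNIV F"
    and Gmax: "max_monotone G"
    and sol_ne: "{z. (z, 0) \<in> op_sum F G} \<noteq> {}"
    and xstar_sol: "(xstar, 0) \<in> op_sum F G"
    and weak_minty: "\<forall>(z,u)\<in>op_sum F G. inner u (z - xstar) \<ge> - \<rho> * (norm u)\<^sup>2"
    and rho: "0 < \<rho>" "\<rho> < \<eta>"
    and J_res: "\<forall>z. J z \<in> resolvent \<eta> (op_sum F G) z"
    and J_meas: "J \<in> borel_measurable borel"
    and x0: "\<forall>w\<in>space M. x 0 w = x0"
    and iter: "\<forall>k. \<forall>w\<in>space M. x (Suc k) w =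
        (1 - (1 - \<rho>/\<eta>) / (sqrt (real k + 2) * ln (real k + 3))) *\<^sub>R x k w
        + ((1 - \<rho>/\<eta>) / (sqrt (real k + 2) * ln (real k + 3))) *\<^sub>R Jt k w"
    and Jt_meas: "\<forall>k. Jt k \<in> borel_measurable M"
    and Jt_int: "\<forall>k. integrable M (\<lambda>w. (norm (Jt k w))\<^sup>2)"
    and ev_meas: "\<forall>k. ev k \<in> borel_measurable (nat_filt M x k)"
    and eb_meas: "\<forall>k. eb k \<in> borel_measurable (nat_filt M x k)"
    and ev_int: "\<forall>k. integrable M (\<lambda>w. (ev k w)\<^sup>2)"
    and eb_int: "\<forall>k. integrable M (\<lambda>w. norm (x k w - xstar) * eb k w)"
    and var_bd: "\<forall>k. AE w in M.
        real_cond_exp M (nat_filt M x k) (\<lambda>v. (norm (Jt k v - J (x k v)))\<^sup>2) w \<le> (ev k w)\<^sup>2"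
    and bias_bd: "\<forall>k. AE w in M.
        norm (vec_cond_exp M (nat_filt M x k) (Jt k) w - J (x k w)) \<le> eb k w"
  shows "(1 - \<rho>/\<eta>) / 4 * (\<Sum>k<K. (1 - \<rho>/\<eta>) / (sqrt (real k + 2) * ln (real k + 3))
            * (\<integral>w. (norm (x k w - J (x k w)))\<^sup>2 \<partial>M))
         \<le> 1/2 * (norm (x0 - xstar))\<^sup>2
           + 3/2 * (\<Sum>k<K. ((1 - \<rho>/\<eta>) / (sqrt (real k + 2) * ln (real k + 3)))\<^sup>2
                * (\<integral>w. (ev k w)\<^sup>2 \<partial>M))
           + (\<Sum>k<K. (1 - \<rho>/\<eta>) / (sqrt (real k + 2) * ln (real k + 3))
                * (\<integral>w. norm (x k w - xstar) * eb k w \<partial>M))"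
proof -
  interpret prob_space M by (rule M)
  define \<alpha> where "\<alpha> = 1 - \<rho>/\<eta>"
  define a where "a k = \<alpha> / (sqrt (real k + 2) * ln (real k + 3))" for k
  have \<alpha>: "0 < \<alpha>" using rho by (simp add: \<alpha>_def)
  note a = step_size_bounds[OF \<alpha>, folded a_def]
  have step: "x (Suc k) w = (1 - a k) *\<^sub>R x k w + a k *\<^sub>R Jt k w" if "w \<in> space M" for k w
    using iter that by (simp add: a_def \<alpha>_def)
  have Jt: "square_integrable M (Jt k)" for k
    using Jt_meas Jt_int by (simp add: square_integrable_def)
  have x: "square_integrable M (x k)" for k
  proof (rule square_integrable_linear_recursion[where c = "\<lambda>k. 1 - a k" and d = a, OF _ Jt step])
    show "square_integrable M (x 0)"
      using x0 by (intro square_integrable_cong[OF square_integrable_const[of x0]]) simp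
  qed
  then have x_meas: "x k \<in> borel_measurable M" for k by (simp add: square_integrable_def)
  \<comment> \<open>Only weak Minty and \<open>J\<close> selecting from the resolvent enter the argument.\<close>
  have resid: "\<alpha> * (norm (z - J z))\<^sup>2 \<le> inner (z - J z) (z - xstar)" for z
    unfolding \<alpha>_def using resolvent_residual_inner_ge[OF J_res[rule_format] weak_minty] rho by simp
  have descent: "\<alpha>/2 * a k * (\<integral>w. (norm (x k w - J (x k w)))\<^sup>2 \<partial>M)
      \<le> (\<integral>w. (norm (x k w - xstar))\<^sup>2 \<partial>M) - (\<integral>w. (norm (x (Suc k) w - xstar))\<^sup>2 \<partial>M)
        + 2 * a k * (\<integral>w. norm (x k w - xstar) * eb k w \<partial>M)
        + 2 * (a k)\<^sup>2 * (\<integral>w. (ev k w)\<^sup>2 \<partial>M)" for k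
    by (rule finite_measure_subalgebra.expected_relaxed_step_descent
        [OF finite_measure_subalgebra_nat_filt[OF x_meas] x measurable_nat_filt[OF order_refl]
          Jt J_meas step resid \<alpha> less_imp_le[OF a(1)] a(2) ev_int[rule_format] eb_int[rule_format]
          var_bd[rule_format] bias_bd[rule_format]])
  have "(\<integral>w. (norm (x 0 w - xstar))\<^sup>2 \<partial>M) = (norm (x0 - xstar))\<^sup>2"
    using x0 by (simp add: prob_space cong: Bochner_Integration.integral_cong)
  moreover have "\<alpha>/4 * (\<Sum>k<K. a k * (\<integral>w. (norm (x k w - J (x k w)))\<^sup>2 \<partial>M))
    \<le> 1/2 * (\<integral>w. (norm (x 0 w - xstar))\<^sup>2 \<partial>M) + 3/2 * (\<Sum>k<K. (a k)\<^sup>2 * (\<integral>w. (ev k w)\<^sup>2 \<partial>M))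
      + (\<Sum>k<K. a k * (\<integral>w. norm (x k w - xstar) * eb k w \<partial>M))"
    by (rule weighted_sum_le_of_descent[where a = a and D = "\<lambda>k. \<integral>w. (norm (x k w - xstar))\<^sup>2 \<partial>M",
          OF descent]) simp_all
  ultimately show ?thesis unfolding a_def \<alpha>_def by simp
qed

end
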